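(* Let $\mathbb{T}=\mathbb{R}/(2\pi\mathbb{Z})$, let $g\in\mathcal{P}(\mathbb{R})$ have finite first moment, and let $m(\mathrm{d}x)=\frac{1}{2\pi}\mathrm{d}x$ be the uniform probability measure on $\mathbb{T}$. For all $\kappa\ge 0$ and all $\beta,\sigma>0$, the product measure $m\otimes g\in\mathcal{P}(\mathbb{T}\times\mathbb{R})$ is a stationary MFG equilibrium with intrinsic frequency distribution $g$.
   Context: For $x\in\mathbb{T}$ and $\mu\in\mathcal{P}(\mathbb{T}\times\mathbb{R})$ set $c(x,\mu):=\int_{\mathbb{T}\times\mathbb{R}}2\sin^2\big(\frac{x-y}{2}\big)\mu(\mathrm{d}y,\mathrm{d}\omega)$. Fix a filtered probability space $(\Omega,\mathbb{F},\mathbb{P})$ satisfying the usual conditions and supporting an $\mathbb{F}$-Brownian motion $B$, such that for every $\nu_0\in\mathcal{P}(\mathbb{T})$ there is an $\mathcal{F}_0$-measurable $\mathbb{T}$-valued random variable with law $\nu_0$. Let $\mathcal{A}$ be the set of square-integrable $\mathbb{F}$-progressively measurable real processes $\alpha$ on $[0,\infty)$. For a flow $(\mu_t)_{t\ge0}\subset\mathcal{P}(\mathbb{T}\times\mathbb{R})$ whose second marginal is $g$ for every $t$, write (disintegration) $\mu_t(\mathrm{d}x,\mathrm{d}\omega)=\mu^\omega_t(\mathrm{d}x)g(\mathrm{d}\omega)$. For $\omega\in\mathbb{R}$ and $\alpha\in\mathcal{A}$, let $X^{\omega,\alpha}_t=X^\omega_0+\int_0^t\alpha_s\mathrm{d}s+\omega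 t+\sigma B_t$ (on $\mathbb{T}$) with $X^\omega_0$ $\mathcal{F}_0$-measurable of law $\mu^\omega_0$, and $J^{\omega,\mu}(\alpha):=\mathbb{E}\int_0^\infty e^{-\beta t}\big[\frac12\alpha_t^2+\kappa c(X^{\omega,\alpha}_t,\mu_t)\big]\mathrm{d}t$. The flow $(\mu_t)$ is a solution of the MFG problem with intrinsic frequency distribution $g$ if (i) the second marginal of every $\mu_t$ is $g$, and (ii) there is a Borel set $E$ with $g(E)=1$ such that for every $\omega\in E$ the disintegration holds with $\mu^\omega_t\in\mathcal{P}(\mathbb{T})$ and there exists $\alpha^\omega_*\in\mathcal{A}$ with $\inf_{\alpha\in\mathcal{A}}J^{\omega,\mu}(\alpha)=J^{\omega,\mu}(\alpha^\omega_* )$ and $\mathcal{L}(X^{\omega,\alpha^\omega_*}_t)=\mu^\omega_t$ for all $t\ge0$. A measure $\mu\in\mathcal{P}(\mathbb{T}\times\mathbb{R})$ is a stationary MFG equilibrium with intrinsic frequency distribution $g$ if the constant flow $\mu_t=\mu$ is such a solution. *)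

theory Defs
  imports "HOL-Probability.Probability"
begin

text \<open>The torus T = R/(2 pi Z) is represented by the fundamental domain [0, 2 pi);
  tproj is the canonical projection R -> T.  Measures on T are Borel measures on the
  reals concentrated on [0, 2 pi); measures on T x R are Borel measures on real x real
  concentrated on [0, 2 pi) x R.\<close>

definition tproj :: "real \<Rightarrow> real" where
  "tproj x = x - 2 * pi * of_int \<lfloor>x / (2 * pi)\<rfloor>"

definition torus_set :: "real set" where
  "torus_set = {0..<2 * pi}"

definition prob_T :: "real measure \<Rightarrow> bool" where
  "prob_T \<nu> \<longleftrightarrow> prob_space \<nu> \<and> sets \<nu> = sets borel \<and> emeasure \<nu> torus_set = 1"

definition prob_TR :: "(real \<times> real) measure \<Rightarrow> bool" where
  "prob_TR \<mu> \<longleftrightarrow> prob_space \<mu> \<and> sets \<mu> = sets (borel \<Otimes>\<^sub>M borel)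
      \<and> emeasure \<mu> (torus_set \<times> UNIV) = 1"

definition unif_T :: "real measure" where
  "unif_T = uniform_measure lborel torus_set"

definition cost_c :: "real \<Rightarrow> (real \<times> real) measure \<Rightarrow> real" where
  "cost_c x \<mu> = (\<integral>p. 2 * (sin ((x - fst p) / 2))\<^sup>2 \<partial>\<mu>)"

definition usual_filtered_prob_space :: "'a measure \<Rightarrow> (real \<Rightarrow> 'a measure) \<Rightarrow> bool" where
  "usual_filtered_prob_space M F \<longleftrightarrow>
     prob_space M \<and>
     (\<forall>N A. N \<in> null_sets M \<and> A \<subseteq> N \<longrightarrow> A \<in> sets M) \<and>
     (\<forall>t\<ge>0. space (F t) = space M \<and> sets (F t) \<subseteq> sets M) \<and>
     (\<forall>s t. 0 \<le> s \<and> s \<le> t \<longrightarrow> sets (F s) \<subseteq> sets (F t)) \<and>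
     (\<forall>N. N \<in> null_sets M \<longrightarrow> N \<in> sets (F 0)) \<and>
     (\<forall>t\<ge>0. sets (F t) = (\<Inter>s\<in>{t<..}. sets (F s)))"

definition is_F_brownian_motion :: "'a measure \<Rightarrow> (real \<Rightarrow> 'a measure) \<Rightarrow> (real \<Rightarrow> 'a \<Rightarrow> real) \<Rightarrow> bool" where
  "is_F_brownian_motion M F B \<longleftrightarrow>
     (\<forall>\<omega>\<in>space M. B 0 \<omega> = 0) \<and>
     (\<forall>\<omega>\<in>space M. continuous_on {0..} (\<lambda>t. B t \<omega>)) \<and>
     (\<forall>t\<ge>0. B t \<in> borel_measurable (F t)) \<and>
     (\<forall>s t. 0 \<le> s \<and> s < t \<longrightarrow>
        distributed M lborel (\<lambda>\<omega>. B t \<omega> - B s \<omega>) (\<lambda>x. ennreal (normal_density 0 (sqrt (t - s)) x)) \<and>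
        (\<forall>A\<in>sets (F s). \<forall>C\<in>sets borel.
           measure M (A \<inter> {\<omega>\<in>space M. B t \<omega> - B s \<omega> \<in> C})
             = measure M A * measure M {\<omega>\<in>space M. B t \<omega> - B s \<omega> \<in> C}))"

definition rich_F0 :: "'a measure \<Rightarrow> (real \<Rightarrow> 'a measure) \<Rightarrow> bool" where
  "rich_F0 M F \<longleftrightarrow> (\<forall>\<nu>. prob_T \<nu> \<longrightarrow>
     (\<exists>X0. X0 \<in> borel_measurable (F 0) \<and> (\<forall>\<omega>\<in>space M. X0 \<omega> \<in> torus_set) \<and> distr M borel X0 = \<nu>))"

definition progressive :: "'a measure \<Rightarrow> (real \<Rightarrow> 'a measure) \<Rightarrow> (real \<Rightarrow> 'a \<Rightarrow> real) \<Rightarrow> bool" where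
  "progressive M F \<alpha> \<longleftrightarrow>
     (\<forall>t\<ge>0. (\<lambda>(s, \<omega>). \<alpha> s \<omega>) \<in> borel_measurable (restrict_space borel {0..t} \<Otimes>\<^sub>M F t))"

definition admissible :: "'a measure \<Rightarrow> (real \<Rightarrow> 'a measure) \<Rightarrow> (real \<Rightarrow> 'a \<Rightarrow> real) set" where
  "admissible M F = {\<alpha>. progressive M F \<alpha> \<and>
     (\<integral>\<^sup>+\<omega>. (\<integral>\<^sup>+s\<in>{0..}. ennreal ((\<alpha> s \<omega>)\<^sup>2) \<partial>lborel) \<partial>M) < \<infinity>}"

definition state :: "(real \<Rightarrow> 'a \<Rightarrow> real) \<Rightarrow> real \<Rightarrow> ('a \<Rightarrow> real) \<Rightarrow> real \<Rightarrow> (real \<Rightarrow> 'a \<Rightarrow> real) \<Rightarrow> real \<Rightarrow> 'a \<Rightarrow> real" where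
  "state B \<sigma> X0 w \<alpha> t \<omega> = tproj (X0 \<omega> + (LBINT s:{0..t}. \<alpha> s \<omega>) + w * t + \<sigma> * B t \<omega>)"

definition cost_J :: "'a measure \<Rightarrow> (real \<Rightarrow> 'a \<Rightarrow> real) \<Rightarrow> real \<Rightarrow> real \<Rightarrow> real \<Rightarrow>
    (real \<Rightarrow> (real \<times> real) measure) \<Rightarrow> ('a \<Rightarrow> real) \<Rightarrow> real \<Rightarrow> (real \<Rightarrow> 'a \<Rightarrow> real) \<Rightarrow> ennreal" where
  "cost_J M B \<beta> \<sigma> \<kappa> \<mu> X0 w \<alpha> =
     (\<integral>\<^sup>+\<omega>. (\<integral>\<^sup>+t\<in>{0..}. ennreal (exp (- \<beta> * t) *
        ((\<alpha> t \<omega>)\<^sup>2 / 2 + \<kappa> * cost_c (state B \<sigma> X0 w \<alpha> t \<omega>) (\<mu> t))) \<partial>lborel) \<partial>M)"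

text \<open>The disintegration mu_t(dx,dw) = mu_t^w(dx) g(dw) is given by a
  kernel K t w; for g-a.e. w (w in E) the kernel is a probability measure on T and for every
  F_0-measurable initial condition with law mu_0^w an optimal admissible control exists whose
  state has law mu_t^w for all t \<ge> 0.\<close>
definition MFG_solution :: "'a measure \<Rightarrow> (real \<Rightarrow> 'a measure) \<Rightarrow> (real \<Rightarrow> 'a \<Rightarrow> real) \<Rightarrow>
    real \<Rightarrow> real \<Rightarrow> real \<Rightarrow> real measure \<Rightarrow> (real \<Rightarrow> (real \<times> real) measure) \<Rightarrow> bool" where
  "MFG_solution M F B \<beta> \<sigma> \<kappa> g \<mu> \<longleftrightarrow>
     (\<forall>t\<ge>0. prob_TR (\<mu> t) \<and> distr (\<mu> t) borel snd = g) \<and>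
     (\<exists>E \<in> sets borel. emeasure g E = 1 \<and>
       (\<exists>K :: real \<Rightarrow> real \<Rightarrow> real measure.
          (\<forall>t\<ge>0. \<forall>A\<in>sets borel. (\<lambda>w. emeasure (K t w) A) \<in> borel_measurable borel) \<and>
          (\<forall>t\<ge>0. \<forall>A\<in>sets borel. \<forall>C\<in>sets borel.
              emeasure (\<mu> t) (A \<times> C) = (\<integral>\<^sup>+w. indicator C w * emeasure (K t w) A \<partial>g)) \<and>
          (\<forall>w\<in>E. (\<forall>t\<ge>0. prob_T (K t w)) \<and>
             (\<forall>X0. X0 \<in> borel_measurable (F 0) \<and> (\<forall>\<omega>\<in>space M. X0 \<omega> \<in> torus_set)
                   \<and> distr M borel X0 = K 0 w \<longrightarrow>
               (\<exists>\<alpha>s \<in> admissible M F.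
                  (INF \<alpha>\<in>admissible M F. cost_J M B \<beta> \<sigma> \<kappa> \<mu> X0 w \<alpha>)
                     = cost_J M B \<beta> \<sigma> \<kappa> \<mu> X0 w \<alpha>s \<and>
                  (\<forall>t\<ge>0. distr M borel (state B \<sigma> X0 w \<alpha>s t) = K t w))))))"

definition stationary_MFG_equilibrium :: "'a measure \<Rightarrow> (real \<Rightarrow> 'a measure) \<Rightarrow> (real \<Rightarrow> 'a \<Rightarrow> real) \<Rightarrow>
    real \<Rightarrow> real \<Rightarrow> real \<Rightarrow> real measure \<Rightarrow> (real \<times> real) measure \<Rightarrow> bool" where
  "stationary_MFG_equilibrium M F B \<beta> \<sigma> \<kappa> g \<mu> \<longleftrightarrow> MFG_solution M F B \<beta> \<sigma> \<kappa> g (\<lambda>t. \<mu>)"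

end

theory Submission
  imports Defs
begin

text \<open>The uniform measure m on the torus is invariant under every rotation x \<mapsto> x + c. Hence
  the mean-field cost c(x, m \<otimes> g) does not depend on x, so no control can lower the
  interaction cost and the zero control, which has no running cost, is optimal. Under the
  zero control the state is X0 + \<omega> t + \<sigma>B t mod 2\<pi>, where X0 has law m and, being
  F 0-measurable, is independent of B t; its law is therefore an average of rotations of m,
  i.e. m itself. So m \<otimes> g is reproduced by the constant kernel \<omega> \<mapsto> m.\<close>

lemma tproj_in_torus_set: "tproj x \<in> torus_set"
proof -
  have "2 * pi * of_int \<lfloor>x / (2 * pi)\<rfloor> \<le> x"
    using mult_left_mono[OF of_int_floor_le[of "x / (2 * pi)"], of "2 * pi"] by simp
  moreover have "x < 2 * pi * of_int \<lfloor>x / (2 * pi)\<rfloor> + 2 * pi"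
    using mult_strict_left_mono[OF real_of_int_floor_add_one_gt[of "x / (2 * pi)"], of "2 * pi"]
    by (simp add: algebra_simps)
  ultimately show ?thesis
    by (simp add: tproj_def torus_set_def)
qed

lemma tproj_eq_self: "x \<in> torus_set \<Longrightarrow> tproj x = x"
  by (simp add: tproj_def torus_set_def floor_eq_iff field_simps)

lemma tproj_add_int_multiple: "tproj (x + 2 * pi * of_int k) = tproj x"
proof -
  have "(x + 2 * pi * of_int k) / (2 * pi) = x / (2 * pi) + of_int k"
    by (simp add: field_simps)
  then show ?thesis
    by (simp add: tproj_def algebra_simps)
qed

lemma tproj_add_tproj: "tproj (x + tproj y) = tproj (x + y)"
  using tproj_add_int_multiple[of "x + y" "- \<lfloor>y / (2 * pi)\<rfloor>"]
  by (simp add: tproj_def algebra_simps)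

lemma tproj_add_torus_set:
  assumes "x \<in> torus_set" "a \<in> torus_set"
  shows "tproj (x + a) = (if x + a < 2 * pi then x + a else x + a - 2 * pi)"
  using assms tproj_add_int_multiple[of "x + a - 2 * pi" 1]
  by (auto simp: tproj_eq_self torus_set_def)

lemma measurable_tproj[measurable]: "tproj \<in> borel_measurable borel"
  unfolding tproj_def by measurable

lemma sin_sq_half_diff_tproj: "(sin ((x - tproj y) / 2))\<^sup>2 = (sin ((x - y) / 2))\<^sup>2"
proof -
  define k where "k = \<lfloor>y / (2 * pi)\<rfloor>"
  have "(x - tproj y) / 2 = (x - y) / 2 + pi * of_int k"
    by (simp add: tproj_def k_def field_simps)
  then show ?thesis
    by (simp only:) (simp add: sin_add power_mult_distrib)
qed

lemma sets_unif_T [simp, measurable_cong]: "sets unif_T = sets borel"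
  by (simp add: unif_T_def)

lemma space_unif_T [simp]: "space unif_T = UNIV"
  by (simp add: unif_T_def)

lemma torus_set_borel [measurable]: "torus_set \<in> sets borel"
  by (simp add: torus_set_def)

lemma prob_space_unif_T: "prob_space unif_T"
  unfolding unif_T_def torus_set_def by (rule prob_space_uniform_measure) auto

lemma emeasure_lborel_vimage_plus:
  fixes S :: "'a::euclidean_space set"
  assumes "S \<in> sets borel"
  shows "emeasure lborel ((+) c -` S) = emeasure lborel S"
proof -
  have "emeasure lborel ((+) c -` S) = emeasure (distr lborel borel ((+) c)) S"
    using assms by (simp add: emeasure_distr)
  then show ?thesis
    by (simp add: lborel_distr_plus)
qed

lemma emeasure_lborel_torus_set_rotate:
  assumes D: "D \<in> sets borel" and a: "a \<in> torus_set"
  shows "emeasure lborel (torus_set \<inter> (\<lambda>x. tproj (x + a)) -` D)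
    = emeasure lborel (torus_set \<inter> D)"
proof -
  have "emeasure lborel (torus_set \<inter> (\<lambda>x. tproj (x + a)) -` D)
      = emeasure lborel ((+) a -` (D \<inter> {a..<2 * pi}) \<union> (+) (a - 2 * pi) -` (D \<inter> {0..<a}))"
    using a by (intro arg_cong[where f = "emeasure lborel"])
      (auto simp: tproj_add_torus_set torus_set_def algebra_simps split: if_splits)
  also have "\<dots> = emeasure lborel ((+) a -` (D \<inter> {a..<2 * pi}))
      + emeasure lborel ((+) (a - 2 * pi) -` (D \<inter> {0..<a}))"
    using D by (intro plus_emeasure[symmetric]) auto
  also have "\<dots> = emeasure lborel (D \<inter> {a..<2 * pi}) + emeasure lborel (D \<inter> {0..<a})"
    using D by (simp add: emeasure_lborel_vimage_plus del: vimage_Int)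
  also have "\<dots> = emeasure lborel (D \<inter> {a..<2 * pi} \<union> D \<inter> {0..<a})"
    using D by (intro plus_emeasure) auto
  also have "D \<inter> {a..<2 * pi} \<union> D \<inter> {0..<a} = torus_set \<inter> D"
    using a by (auto simp: torus_set_def)
  finally show ?thesis .
qed

lemma distr_unif_T_rotate: "distr unif_T borel (\<lambda>x. tproj (x + c)) = unif_T"
proof -
  have "distr unif_T lborel (\<lambda>x. tproj (x + tproj c)) = uniform_measure lborel torus_set"
  proof (rule uniform_distrI)
    fix D :: "real set" assume "D \<in> sets lborel"
    then have "(\<lambda>x. tproj (x + tproj c)) -` D \<in> sets borel"
      by (intro measurable_sets_borel[of _ borel]) auto
    with \<open>D \<in> sets lborel\<close>
    show "emeasure unif_T ((\<lambda>x. tproj (x + tproj c)) -` D \<inter> space unif_T)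
        = emeasure lborel (torus_set \<inter> D) / emeasure lborel torus_set"
      by (simp add: unif_T_def emeasure_uniform_measure tproj_in_torus_set
          emeasure_lborel_torus_set_rotate)
  qed (auto simp: torus_set_def)
  then show ?thesis
    by (simp add: tproj_add_tproj unif_T_def cong: distr_cong)
qed

lemma distr_unif_T_pair_tproj_add:
  assumes "prob_space \<nu>" and [measurable_cong]: "sets \<nu> = sets borel"
  shows "distr (unif_T \<Otimes>\<^sub>M \<nu>) borel (\<lambda>(x, y). tproj (x + y)) = unif_T"
proof (rule measure_eqI)
  interpret \<nu>: prob_space \<nu> by fact
  interpret pair_sigma_finite unif_T \<nu>
    using prob_space_unif_T
    by (simp add: pair_sigma_finite_def prob_space_imp_sigma_finite \<nu>.sigma_finite_measure_axioms)
  fix D assume "D \<in> sets (distr (unif_T \<Otimes>\<^sub>M \<nu>) borel (\<lambda>(x, y). tproj (x + y)))"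
  then have [measurable]: "D \<in> sets borel" by simp
  have "space \<nu> = UNIV"
    using sets_eq_imp_space_eq[OF assms(2)] by simp
  have "(\<lambda>(x, y). tproj (x + y)) -` D \<inter> space (unif_T \<Otimes>\<^sub>M \<nu>) \<in> sets (unif_T \<Otimes>\<^sub>M \<nu>)"
    by measurable
  then have "emeasure (distr (unif_T \<Otimes>\<^sub>M \<nu>) borel (\<lambda>(x, y). tproj (x + y))) D
      = (\<integral>\<^sup>+y. emeasure unif_T ((\<lambda>x. tproj (x + y)) -` D) \<partial>\<nu>)"
    by (simp add: emeasure_distr emeasure_pair_measure_alt2 space_pair_measure
        \<open>space \<nu> = UNIV\<close> vimage_def)
  also have "\<dots> = (\<integral>\<^sup>+y. emeasure unif_T D \<partial>\<nu>)"
  proof (rule nn_integral_cong)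
    fix y
    have "emeasure unif_T ((\<lambda>x. tproj (x + y)) -` D)
        = emeasure (distr unif_T borel (\<lambda>x. tproj (x + y))) D"
      by (simp add: emeasure_distr)
    then show "emeasure unif_T ((\<lambda>x. tproj (x + y)) -` D) = emeasure unif_T D"
      by (simp only: distr_unif_T_rotate)
  qed
  also have "\<dots> = emeasure unif_T D"
    by (simp add: \<nu>.emeasure_space_1)
  finally show "emeasure (distr (unif_T \<Otimes>\<^sub>M \<nu>) borel (\<lambda>(x, y). tproj (x + y))) D
      = emeasure unif_T D" .
qed simp

lemma (in prob_space) distr_tproj_add_indep_unif_T:
  assumes indep: "indep_var borel X borel Z" and law: "distr M borel X = unif_T"
  shows "distr M borel (\<lambda>\<omega>. tproj (X \<omega> + Z \<omega>)) = unif_T"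
proof -
  have [measurable]: "X \<in> borel_measurable M" "Z \<in> borel_measurable M"
    using indep by (auto dest: indep_var_rv1 indep_var_rv2)
  have "distr M borel (\<lambda>\<omega>. tproj (X \<omega> + Z \<omega>))
      = distr (distr M (borel \<Otimes>\<^sub>M borel) (\<lambda>\<omega>. (X \<omega>, Z \<omega>))) borel
          (\<lambda>(x, z). tproj (x + z))"
    by (simp add: distr_distr comp_def)
  also have "distr M (borel \<Otimes>\<^sub>M borel) (\<lambda>\<omega>. (X \<omega>, Z \<omega>)) = unif_T \<Otimes>\<^sub>M distr M borel Z"
    using indep law by (simp add: indep_var_distribution_eq)
  also have "distr \<dots> borel (\<lambda>(x, z). tproj (x + z)) = unif_T"
    by (rule distr_unif_T_pair_tproj_add) (simp_all add: prob_space_distr)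
  finally show ?thesis .
qed

lemma usual_filtered_prob_space_prob_space:
  "usual_filtered_prob_space M F \<Longrightarrow> prob_space M"
  unfolding usual_filtered_prob_space_def by (elim conjE)

lemma usual_filtered_prob_space_subalgebra:
  assumes "usual_filtered_prob_space M F" "0 \<le> t"
  shows "subalgebra M (F t)"
proof -
  have "\<forall>t\<ge>0. space (F t) = space M \<and> sets (F t) \<subseteq> sets M"
    using assms(1) unfolding usual_filtered_prob_space_def by (elim conjE)
  with assms(2) show ?thesis
    by (simp add: subalgebra_def)
qed

lemma is_F_brownian_motion_start:
  "is_F_brownian_motion M F B \<Longrightarrow> \<omega> \<in> space M \<Longrightarrow> B 0 \<omega> = 0"
  unfolding is_F_brownian_motion_def by (elim conjE) simp

lemma is_F_brownian_motion_measurable: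
  "is_F_brownian_motion M F B \<Longrightarrow> 0 \<le> t \<Longrightarrow> B t \<in> borel_measurable (F t)"
  unfolding is_F_brownian_motion_def by (elim conjE) simp

lemma is_F_brownian_motion_indep_increment:
  assumes "is_F_brownian_motion M F B" "0 \<le> s" "s < t" "A \<in> sets (F s)" "C \<in> sets borel"
  shows "measure M (A \<inter> {\<omega> \<in> space M. B t \<omega> - B s \<omega> \<in> C})
    = measure M A * measure M {\<omega> \<in> space M. B t \<omega> - B s \<omega> \<in> C}"
proof -
  have "\<forall>s t. 0 \<le> s \<and> s < t \<longrightarrow> (\<forall>A\<in>sets (F s). \<forall>C\<in>sets borel.
      measure M (A \<inter> {\<omega> \<in> space M. B t \<omega> - B s \<omega> \<in> C})
        = measure M A * measure M {\<omega> \<in> space M. B t \<omega> - B s \<omega> \<in> C})"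
    using assms(1) unfolding is_F_brownian_motion_def by (elim conjE) blast
  with assms(2-5) show ?thesis
    by blast
qed

lemma is_F_brownian_motion_indep_var_F0:
  assumes U: "usual_filtered_prob_space M F" and BM: "is_F_brownian_motion M F B"
    and X: "X \<in> borel_measurable (F 0)" and t: "0 < t"
  shows "prob_space.indep_var M borel X borel (B t)"
proof -
  interpret prob_space M
    using U by (rule usual_filtered_prob_space_prob_space)
  note F_sub = usual_filtered_prob_space_subalgebra[OF U]
  have X_M: "X \<in> borel_measurable M"
    using measurable_from_subalg[OF F_sub X] by simp
  have B_M: "B t \<in> borel_measurable M"
    using measurable_from_subalg[OF F_sub is_F_brownian_motion_measurable[OF BM]] t by simp
  have X_F0: "X -` A \<inter> space M \<in> sets (F 0)" if "A \<in> sets borel" for A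
    using measurable_sets[OF X that] F_sub[of 0] by (simp add: subalgebra_def)
  have indep: "indep_set {X -` A \<inter> space M | A. A \<in> sets borel}
      {B t -` C \<inter> space M | C. C \<in> sets borel}"
  proof (rule indep_setI)
    show "{X -` A \<inter> space M | A. A \<in> sets borel} \<subseteq> events"
      using measurable_sets[OF X_M] by blast
    show "{B t -` C \<inter> space M | C. C \<in> sets borel} \<subseteq> events"
      using measurable_sets[OF B_M] by blast
    fix a b
    assume "a \<in> {X -` A \<inter> space M | A. A \<in> sets borel}"
      and "b \<in> {B t -` C \<inter> space M | C. C \<in> sets borel}"
    then obtain A C where a: "a = X -` A \<inter> space M" "A \<in> sets borel"
      and b: "b = B t -` C \<inter> space M" "C \<in> sets borel"
      by blast
    have "{\<omega> \<in> space M. B t \<omega> - B 0 \<omega> \<in> C} = b"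
      using is_F_brownian_motion_start[OF BM] b by auto
    then show "prob (a \<inter> b) = prob a * prob b"
      using is_F_brownian_motion_indep_increment[OF BM order_refl t X_F0 b(2), of A] a by simp
  qed
  have stable: "Int_stable {f -` A \<inter> space M | A. A \<in> sets (borel :: real measure)}"
    for f :: "'a \<Rightarrow> real"
  proof (safe intro!: Int_stableI)
    fix A A' :: "real set" assume "A \<in> sets borel" "A' \<in> sets borel"
    then show "\<exists>C. (f -` A \<inter> space M) \<inter> (f -` A' \<inter> space M) = f -` C \<inter> space M
        \<and> C \<in> sets borel"
      by (intro exI[of _ "A \<inter> A'"]) auto
  qed
  show ?thesis
    unfolding indep_var_eq by (intro conjI X_M B_M indep_set_sigma_sets[OF indep stable stable])
qed

lemma state_zero_control:
  "state B \<sigma> X0 w (\<lambda>t \<omega>. 0) t = (\<lambda>\<omega>. tproj (X0 \<omega> + (w * t + \<sigma> * B t \<omega>)))"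
  by (simp add: state_def add.assoc fun_eq_iff)

lemma distr_state_zero_control:
  assumes U: "usual_filtered_prob_space M F" and BM: "is_F_brownian_motion M F B"
    and X0: "X0 \<in> borel_measurable (F 0)" and law: "distr M borel X0 = unif_T" and t: "0 \<le> t"
  shows "distr M borel (state B \<sigma> X0 w (\<lambda>t \<omega>. 0) t) = unif_T"
proof -
  interpret prob_space M
    using U by (rule usual_filtered_prob_space_prob_space)
  have X0_M [measurable]: "X0 \<in> borel_measurable M"
    using measurable_from_subalg[OF usual_filtered_prob_space_subalgebra[OF U order_refl] X0] .
  consider "t = 0" | "0 < t"
    using t by linarith
  then show ?thesis
  proof cases
    case 1
    have "distr M borel (state B \<sigma> X0 w (\<lambda>t \<omega>. 0) t) = distr M borel (\<lambda>\<omega>. tproj (X0 \<omega> + 0))"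
      using is_F_brownian_motion_start[OF BM] 1
      by (intro distr_cong) (simp_all add: state_zero_control)
    also have "\<dots> = distr (distr M borel X0) borel (\<lambda>x. tproj (x + 0))"
      by (simp add: distr_distr comp_def)
    finally show ?thesis
      using distr_unif_T_rotate[of 0] by (simp add: law)
  next
    case 2
    have "indep_var borel X0 borel (\<lambda>\<omega>. w * t + \<sigma> * B t \<omega>)"
      using indep_var_compose[OF is_F_brownian_motion_indep_var_F0[OF U BM X0 2],
          of id borel "\<lambda>b. w * t + \<sigma> * b" borel]
      by (simp add: comp_def)
    then have "distr M borel (\<lambda>\<omega>. tproj (X0 \<omega> + (w * t + \<sigma> * B t \<omega>))) = unif_T"
      using law by (rule distr_tproj_add_indep_unif_T)
    then show ?thesis
      by (simp only: state_zero_control)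
  qed
qed

lemma integral_unif_T_rotate:
  fixes f :: "real \<Rightarrow> real"
  assumes [measurable]: "f \<in> borel_measurable borel"
  shows "(\<integral>x. f (tproj (x + c)) \<partial>unif_T) = (\<integral>x. f x \<partial>unif_T)"
proof -
  have "(\<integral>x. f x \<partial>unif_T) = (\<integral>x. f x \<partial>distr unif_T borel (\<lambda>x. tproj (x + c)))"
    by (simp add: distr_unif_T_rotate)
  also have "\<dots> = (\<integral>x. f (tproj (x + c)) \<partial>unif_T)"
    by (subst integral_distr) simp_all
  finally show ?thesis ..
qed

lemma cost_c_unif_T_pair:
  assumes "prob_space g" and [measurable_cong]: "sets g = sets borel"
  shows "cost_c x (unif_T \<Otimes>\<^sub>M g) = (\<integral>y. 2 * (sin ((x - y) / 2))\<^sup>2 \<partial>unif_T)"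
proof -
  have "(\<integral>y. 2 * (sin ((x - y) / 2))\<^sup>2 \<partial>unif_T)
      = (\<integral>y. 2 * (sin ((x - y) / 2))\<^sup>2 \<partial>distr (unif_T \<Otimes>\<^sub>M g) unif_T fst)"
    using assms(1) by (simp add: prob_space.distr_pair_fst)
  also have "\<dots> = cost_c x (unif_T \<Otimes>\<^sub>M g)"
    unfolding cost_c_def by (subst integral_distr) simp_all
  finally show ?thesis ..
qed

lemma cost_c_unif_T_pair_const:
  assumes "prob_space g" "sets g = sets borel"
  shows "cost_c x (unif_T \<Otimes>\<^sub>M g) = cost_c y (unif_T \<Otimes>\<^sub>M g)"
proof -
  have "cost_c x (unif_T \<Otimes>\<^sub>M g) = (\<integral>z. 2 * (sin (- z / 2))\<^sup>2 \<partial>unif_T)" for x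
  proof -
    have "cost_c x (unif_T \<Otimes>\<^sub>M g) = (\<integral>y. 2 * (sin ((x - y) / 2))\<^sup>2 \<partial>unif_T)"
      using assms by (rule cost_c_unif_T_pair)
    also have "\<dots> = (\<integral>z. 2 * (sin ((x - tproj (z + x)) / 2))\<^sup>2 \<partial>unif_T)"
      by (rule integral_unif_T_rotate[symmetric]) simp
    also have "\<dots> = (\<integral>z. 2 * (sin (- z / 2))\<^sup>2 \<partial>unif_T)"
      by (simp add: sin_sq_half_diff_tproj)
    finally show ?thesis .
  qed
  then show ?thesis
    by simp
qed

lemma admissible_zero_control: "(\<lambda>t \<omega>. 0) \<in> admissible M F"
  by (simp add: admissible_def progressive_def)

lemma cost_J_zero_control_le:
  assumes "\<And>t x y. cost_c x (\<mu> t) = cost_c y (\<mu> t)"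
  shows "cost_J M B \<beta> \<sigma> \<kappa> \<mu> X0 w (\<lambda>t \<omega>. 0) \<le> cost_J M B \<beta> \<sigma> \<kappa> \<mu> X0 w \<alpha>"
proof -
  have "exp (- \<beta> * t) * (0\<^sup>2 / 2 + \<kappa> * cost_c (state B \<sigma> X0 w (\<lambda>t \<omega>. 0) t \<omega>) (\<mu> t))
      \<le> exp (- \<beta> * t) * ((\<alpha> t \<omega>)\<^sup>2 / 2 + \<kappa> * cost_c (state B \<sigma> X0 w \<alpha> t \<omega>) (\<mu> t))" for t \<omega>
    using assms[where t = t and x = "state B \<sigma> X0 w (\<lambda>t \<omega>. 0) t \<omega>"
        and y = "state B \<sigma> X0 w \<alpha> t \<omega>"]
    by (intro mult_left_mono) simp_all
  then show ?thesis
    unfolding cost_J_def by (intro nn_integral_mono mult_right_mono ennreal_leI) auto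
qed

lemma INF_cost_J_zero_control:
  assumes "\<And>t x y. cost_c x (\<mu> t) = cost_c y (\<mu> t)"
  shows "(INF \<alpha>\<in>admissible M F. cost_J M B \<beta> \<sigma> \<kappa> \<mu> X0 w \<alpha>)
    = cost_J M B \<beta> \<sigma> \<kappa> \<mu> X0 w (\<lambda>t \<omega>. 0)" (is "?inf = ?J0")
proof (rule antisym)
  show "?inf \<le> ?J0"
    by (rule INF_lower[OF admissible_zero_control])
  show "?J0 \<le> ?inf"
    using assms by (intro INF_greatest cost_J_zero_control_le)
qed

lemma prob_T_unif_T: "prob_T unif_T"
proof -
  interpret prob_space unif_T
    by (rule prob_space_unif_T)
  have "emeasure unif_T torus_set = emeasure unif_T (space unif_T)"
    by (simp add: unif_T_def emeasure_uniform_measure)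
  then show ?thesis
    using emeasure_space_1 by (simp add: prob_T_def prob_space_unif_T)
qed

lemma emeasure_unif_T_pair_Times:
  assumes "prob_space g" "sets g = sets borel" "A \<in> sets borel" "C \<in> sets borel"
  shows "emeasure (unif_T \<Otimes>\<^sub>M g) (A \<times> C) = emeasure unif_T A * emeasure g C"
  using assms
  by (intro sigma_finite_measure.emeasure_pair_measure_Times prob_space_imp_sigma_finite) simp_all

lemma prob_TR_unif_T_pair:
  assumes "prob_space g" "sets g = sets borel"
  shows "prob_TR (unif_T \<Otimes>\<^sub>M g)"
proof -
  have "emeasure (unif_T \<Otimes>\<^sub>M g) (torus_set \<times> UNIV)
      = emeasure unif_T torus_set * emeasure g UNIV"
    using assms by (simp add: emeasure_unif_T_pair_Times)
  also have "\<dots> = 1"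
    using prob_T_unif_T prob_space.emeasure_space_1[OF assms(1)] sets_eq_imp_space_eq[OF assms(2)]
    by (simp add: prob_T_def)
  finally show ?thesis
    using assms
    by (simp add: prob_TR_def prob_space_pair prob_space_unif_T cong: sets_pair_measure_cong)
qed

lemma distr_snd_unif_T_pair:
  assumes "prob_space g" and [measurable_cong]: "sets g = sets borel"
  shows "distr (unif_T \<Otimes>\<^sub>M g) borel snd = g"
proof (rule measure_eqI)
  fix C assume "C \<in> sets (distr (unif_T \<Otimes>\<^sub>M g) borel snd)"
  then have C: "C \<in> sets borel" by simp
  have "snd -` C \<inter> space (unif_T \<Otimes>\<^sub>M g) = UNIV \<times> C"
    using sets_eq_imp_space_eq[OF assms(2)] by (auto simp: space_pair_measure)
  then have "emeasure (distr (unif_T \<Otimes>\<^sub>M g) borel snd) C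
      = emeasure (unif_T \<Otimes>\<^sub>M g) (UNIV \<times> C)"
    using C by (simp add: emeasure_distr)
  also have "\<dots> = emeasure g C"
    using assms C prob_space.emeasure_space_1[OF prob_space_unif_T]
    by (simp add: emeasure_unif_T_pair_Times)
  finally show "emeasure (distr (unif_T \<Otimes>\<^sub>M g) borel snd) C = emeasure g C" .
qed (simp add: assms(2))

theorem lemma2p1:
  fixes M :: "'a measure" and F :: "real \<Rightarrow> 'a measure" and B :: "real \<Rightarrow> 'a \<Rightarrow> real"
    and g :: "real measure" and \<kappa> \<beta> \<sigma> :: real
  assumes "usual_filtered_prob_space M F"
    and "is_F_brownian_motion M F B"
    and "rich_F0 M F"
    and "prob_space g" and "sets g = sets borel" and "integrable g (\<lambda>w. w)"
    and "\<kappa> \<ge> 0" and "\<beta> > 0" and "\<sigma> > 0"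
  shows "stationary_MFG_equilibrium M F B \<beta> \<sigma> \<kappa> g (unif_T \<Otimes>\<^sub>M g)"
proof -
  note U = assms(1) and BM = assms(2) and g = assms(4,5)
  show ?thesis
    unfolding stationary_MFG_equilibrium_def MFG_solution_def
  proof (intro conjI allI impI ballI bexI[of _ UNIV] exI[of _ "\<lambda>t w. unif_T"]
      bexI[OF _ admissible_zero_control])
    show "prob_TR (unif_T \<Otimes>\<^sub>M g)" "distr (unif_T \<Otimes>\<^sub>M g) borel snd = g"
      using g by (simp_all add: prob_TR_unif_T_pair distr_snd_unif_T_pair)
    show "emeasure g UNIV = 1"
      using prob_space.emeasure_space_1[OF g(1)] sets_eq_imp_space_eq[OF g(2)] by simp
    show "emeasure (unif_T \<Otimes>\<^sub>M g) (A \<times> C) = (\<integral>\<^sup>+w. indicator C w * emeasure unif_T A \<partial>g)"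
      if "A \<in> sets borel" "C \<in> sets borel" for A C
      using g that by (simp add: emeasure_unif_T_pair_Times nn_integral_multc mult.commute)
    show "(INF \<alpha>\<in>admissible M F. cost_J M B \<beta> \<sigma> \<kappa> (\<lambda>t. unif_T \<Otimes>\<^sub>M g) X0 w \<alpha>)
        = cost_J M B \<beta> \<sigma> \<kappa> (\<lambda>t. unif_T \<Otimes>\<^sub>M g) X0 w (\<lambda>t \<omega>. 0)" for X0 w
      using cost_c_unif_T_pair_const[OF g] by (rule INF_cost_J_zero_control)
    show "distr M borel (state B \<sigma> X0 w (\<lambda>t \<omega>. 0) t) = unif_T"
      if "X0 \<in> borel_measurable (F 0) \<and> (\<forall>\<omega>\<in>space M. X0 \<omega> \<in> torus_set)
          \<and> distr M borel X0 = unif_T" and "0 \<le> t" for X0 w t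
      using distr_state_zero_control[OF U BM] that by blast
  qed (simp_all add: prob_T_unif_T)
qed

end
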